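(* Let $\{p,q\}\subset[1,\infty]$ with $q<p$, let $\mathbb Q$ be a probability measure on $(\Omega,\mathcal F)$ equivalent to $\mathbb P$, and let $(\mathcal B_n)_{n\in\mathbb N_0}$ be $\sigma$-subfields. Then $\|\mathbb P_{\mathcal B_n}-\mathbb P_{\mathcal B_0}\|_{L^p(\mathbb P)\to L^q(\mathbb P)}\to0$ if and only if $\|\mathbb Q_{\mathcal B_n}-\mathbb Q_{\mathcal B_0}\|_{L^p(\mathbb Q)\to L^q(\mathbb Q)}\to0$.
   Context: Let $(\Omega,\mathcal F,\mathbb P)$ be a (not necessarily complete) probability space and $\mathcal N:=\{F\in\mathcal F:\mathbb P(F)=0\}$. A $\sigma$-subfield is a sub-$\sigma$-field $\mathcal A\subset\mathcal F$ with $\mathcal A=\sigma(\mathcal A\cup\mathcal N)$ (the same notion for any $\mathbb Q\sim\mathbb P$). For a probability measure $\mathbb R\sim\mathbb P$ and a $\sigma$-subfield $\mathcal A$, $\mathbb R_{\mathcal A}f:=\mathbb E^{\mathbb R}[f\mid\mathcal A]$, viewed as a bounded linear operator between the real normed spaces $L^p(\mathbb R)$ and $L^q(\mathbb R)$, with operator norm $\|\cdot\|_{L^p(\mathbb R)\to L^q(\mathbb R)}$. *)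

theory Defs
  imports "HOL-Probability.Probability"
begin

definition sigma_subfield :: "'a measure \<Rightarrow> 'a measure \<Rightarrow> bool" where
  "sigma_subfield M F \<longleftrightarrow> subalgebra M F \<and>
     sets F = sigma_sets (space M) (sets F \<union> null_sets M)"

definition equiv_measure :: "'a measure \<Rightarrow> 'a measure \<Rightarrow> bool" where
  "equiv_measure M N \<longleftrightarrow> sets N = sets M \<and> null_sets N = null_sets M"

definition lp_norm :: "'a measure \<Rightarrow> ennreal \<Rightarrow> ('a \<Rightarrow> real) \<Rightarrow> ennreal" where
  "lp_norm M p f =
     (if p = \<infinity> then e2ennreal (esssup M (\<lambda>x. ereal \<bar>f x\<bar>))
      else (let I = (\<integral>\<^sup>+ x. ennreal (\<bar>f x\<bar> powr enn2real p) \<partial>M) in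
            if I = \<infinity> then \<infinity> else ennreal (enn2real I powr (1 / enn2real p))))"

definition cond_exp_diff_opnorm ::
  "'a measure \<Rightarrow> ennreal \<Rightarrow> ennreal \<Rightarrow> 'a measure \<Rightarrow> 'a measure \<Rightarrow> ennreal" where
  "cond_exp_diff_opnorm M p q F G =
     (SUP f \<in> {f \<in> borel_measurable M. lp_norm M p f \<le> 1}.
        lp_norm M q (\<lambda>x. real_cond_exp M F f x - real_cond_exp M G f x))"

end

theory Submission
  imports Defs
begin

text \<open>
  The whole argument runs through the auxiliary quantity
  \<open>\<kappa>(F,G) = sup {\<parallel>E[f|F] - E[f|G]\<parallel>\<^sub>1 : \<bar>f\<bar> \<le> 1}\<close>, the \<open>L\<^sup>\<infinity> \<rightarrow> L\<^sup>1\<close> norm.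

  For a fixed probability measure and \<open>1 \<le> q < p \<le> \<infinity>\<close>, the \<open>L\<^sup>p \<rightarrow> L\<^sup>q\<close> norms tend to zero
  iff the \<open>\<kappa>\<close>-norms do: one direction is Jensen's inequality \<open>\<parallel>h\<parallel>\<^sub>1 \<le> \<parallel>h\<parallel>\<^sub>q\<close>; for the
  other, split \<open>f\<close> in the unit ball of \<open>L\<^sup>p\<close> into its truncation at level \<open>M\<close>, controlled by
  \<open>\<kappa>\<close> (conditional differences are bounded by \<open>2M\<close>, so their \<open>L\<^sup>q\<close> norm is dominated by their
  \<open>L\<^sup>1\<close> norm), and a tail whose \<open>L\<^sup>q\<close> norm is \<open>O(M\<^sup>(q-p)/q)\<close> since \<open>q < p\<close>.

  Hence it suffices to show that \<open>\<kappa>\<close> tending to zero is preserved under passage from \<open>P\<close>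
  to \<open>Q = Z\<cdot>P\<close>. By Bayes' formula \<open>E\<^sub>Q[f|F] = E\<^sub>P[Zf|F] / E\<^sub>P[Z|F]\<close>, the difference
  of two such quotients is controlled by the \<open>P\<close>-differences of numerators and denominators,
  as long as the denominator \<open>E\<^sub>P[Z|B\<^sub>0]\<close> stays away from zero; that denominator is
  positive \<open>Q\<close>-a.e., and the unbounded part of \<open>Z\<close> is removed by truncation at a level
  \<open>K\<close>, whose tail \<open>\<integral> Z - min Z K dP\<close> tends to zero.
\<close>

lemma prob_space_sigma_finite_subalgebra:
  assumes "prob_space R" "subalgebra R F"
  shows "sigma_finite_subalgebra R F"
proof -
  interpret prob_space R by fact
  have "finite_measure_subalgebra R F"
    unfolding finite_measure_subalgebra_def finite_measure_subalgebra_axioms_def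
    using assms(2) finite_measure_axioms by auto
  then show ?thesis by (rule finite_measure_subalgebra_is_sigma_finite)
qed

lemma real_cond_exp_abs_le_AE:
  assumes "prob_space R" "subalgebra R F" "g \<in> borel_measurable R" "AE x in R. \<bar>g x\<bar> \<le> C"
  shows "AE x in R. \<bar>real_cond_exp R F g x\<bar> \<le> C"
proof -
  interpret sigma_finite_subalgebra R F using prob_space_sigma_finite_subalgebra assms by auto
  interpret p: prob_space R by fact
  have ig: "integrable R g" using assms(3,4) by (intro p.integrable_const_bound[of _ C]) auto
  have "AE x in R. real_cond_exp R F g x \<le> C"
    using assms(4) by (intro real_cond_exp_le_c[OF ig]) auto
  moreover have "AE x in R. real_cond_exp R F g x \<ge> -C"
    using assms(4) by (intro real_cond_exp_ge_c[OF ig]) auto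
  ultimately show ?thesis by eventually_elim auto
qed

lemma convex_on_abs_powr:
  assumes "(r::real) \<ge> 1"
  shows "convex_on UNIV (\<lambda>x::real. \<bar>x\<bar> powr r)"
proof (rule convex_onI)
  fix t x y :: real assume t: "0 < t" "t < 1"
  have powr_convex_nonneg: "((1-t)*a + t*b) powr r \<le> (1-t) * a powr r + t * b powr r"
    if ab: "a \<ge> 0" "b \<ge> 0" for a b :: real
  proof -
    consider "a > 0" "b > 0" | "a = 0" | "b = 0" using ab by linarith
    then show ?thesis
    proof cases
      case 1
      have "convex_on {0<..} (\<lambda>x. x powr r)" using powr_convex assms by blast
      from convex_onD[OF this, of t a b] 1 t show ?thesis by (simp add: algebra_simps)
    next
      case 2
      have "(t*b) powr r = t powr r * b powr r" using t ab by (simp add: powr_mult)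
      also have "\<dots> \<le> t * b powr r"
        using t assms by (intro mult_right_mono powr_le_one_le) auto
      finally show ?thesis using 2 by simp
    next
      case 3
      have "((1-t)*a) powr r = (1-t) powr r * a powr r" using t ab by (simp add: powr_mult)
      also have "\<dots> \<le> (1-t) * a powr r"
        using t assms by (intro mult_right_mono powr_le_one_le) auto
      finally show ?thesis using 3 by simp
    qed
  qed
  have "\<bar>(1-t)*x + t*y\<bar> \<le> (1-t)*\<bar>x\<bar> + t*\<bar>y\<bar>"
    using abs_triangle_ineq[of "(1-t)*x" "t*y"] t by (simp add: abs_mult)
  hence "\<bar>(1-t)*x + t*y\<bar> powr r \<le> ((1-t)*\<bar>x\<bar> + t*\<bar>y\<bar>) powr r"
    using assms by (intro powr_mono2) auto
  also have "\<dots> \<le> (1-t) * \<bar>x\<bar> powr r + t * \<bar>y\<bar> powr r" by (rule powr_convex_nonneg) auto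
  finally show "\<bar>(1 - t) *\<^sub>R x + t *\<^sub>R y\<bar> powr r \<le> (1 - t) * \<bar>x\<bar> powr r + t * \<bar>y\<bar> powr r"
    by simp
qed simp

lemma real_cond_exp_jensen_integral:
  fixes \<phi> :: "real \<Rightarrow> real"
  assumes "prob_space R" "subalgebra R F" "integrable R g" "integrable R (\<lambda>x. \<phi> (g x))"
    "convex_on UNIV \<phi>" "\<phi> \<in> borel_measurable borel"
  shows "integrable R (\<lambda>x. \<phi> (real_cond_exp R F g x))"
    "(\<integral>x. \<phi> (real_cond_exp R F g x) \<partial>R) \<le> (\<integral>x. \<phi> (g x) \<partial>R)"
proof -
  interpret sigma_finite_subalgebra R F using prob_space_sigma_finite_subalgebra assms by auto
  show int: "integrable R (\<lambda>x. \<phi> (real_cond_exp R F g x))"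
    by (rule integrable_convex_cond_exp[of g UNIV 0 0]) (use assms in auto)
  have "AE x in R. \<phi> (real_cond_exp R F g x) \<le> real_cond_exp R F (\<lambda>x. \<phi> (g x)) x"
    by (rule real_cond_exp_jensens_inequality(2)[of g UNIV 0 0]) (use assms in auto)
  hence "(\<integral>x. \<phi> (real_cond_exp R F g x) \<partial>R) \<le> (\<integral>x. real_cond_exp R F (\<lambda>x. \<phi> (g x)) x \<partial>R)"
    by (intro integral_mono_AE int real_cond_exp_int(1) assms)
  also have "\<dots> = (\<integral>x. \<phi> (g x) \<partial>R)" by (rule real_cond_exp_int(2)) (rule assms)
  finally show "(\<integral>x. \<phi> (real_cond_exp R F g x) \<partial>R) \<le> (\<integral>x. \<phi> (g x) \<partial>R)" .
qed

lemma integral_abs_real_cond_exp_le: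
  assumes "prob_space R" "subalgebra R F" "integrable R g"
  shows "(\<integral>x. \<bar>real_cond_exp R F g x\<bar> \<partial>R) \<le> (\<integral>x. \<bar>g x\<bar> \<partial>R)"
  using real_cond_exp_jensen_integral(2)[OF assms _ convex_on_abs_powr[of 1]] assms(3) by auto

section \<open>The \<open>L\<^sup>\<infinity> \<rightarrow> L\<^sup>1\<close> norm of a difference of conditional expectations\<close>

definition cond_exp_diff :: "'a measure \<Rightarrow> 'a measure \<Rightarrow> 'a measure \<Rightarrow> ('a \<Rightarrow> real) \<Rightarrow> 'a \<Rightarrow> real" where
  "cond_exp_diff R F G f = (\<lambda>x. real_cond_exp R F f x - real_cond_exp R G f x)"

text \<open>Taking the supremum over pointwise rather than a.e. bounded \<open>f\<close> loses
  nothing, since conditional expectations only depend on the a.e. class of \<open>f\<close>.\<close>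

definition cond_exp_diff_opnorm_inf_1 :: "'a measure \<Rightarrow> 'a measure \<Rightarrow> 'a measure \<Rightarrow> ennreal" where
  "cond_exp_diff_opnorm_inf_1 R F G =
     (SUP f \<in> {f \<in> borel_measurable R. \<forall>x\<in>space R. \<bar>f x\<bar> \<le> 1}.
        ennreal (\<integral>x. \<bar>cond_exp_diff R F G f x\<bar> \<partial>R))"

lemma cond_exp_diff_measurable[measurable]: "cond_exp_diff R F G f \<in> borel_measurable R"
  unfolding cond_exp_diff_def by measurable

lemma cond_exp_diff_abs_le_AE:
  assumes "prob_space R" "subalgebra R F" "subalgebra R G" "f \<in> borel_measurable R"
    "AE x in R. \<bar>f x\<bar> \<le> C"
  shows "AE x in R. \<bar>cond_exp_diff R F G f x\<bar> \<le> 2 * C"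
  using real_cond_exp_abs_le_AE[OF assms(1,2,4,5)] real_cond_exp_abs_le_AE[OF assms(1,3,4,5)]
  by eventually_elim (auto simp: cond_exp_diff_def)

lemma cond_exp_diff_opnorm_inf_1_le_2:
  assumes "prob_space R" "subalgebra R F" "subalgebra R G"
  shows "cond_exp_diff_opnorm_inf_1 R F G \<le> 2"
  unfolding cond_exp_diff_opnorm_inf_1_def
proof (rule SUP_least)
  interpret prob_space R by fact
  fix f :: "'a \<Rightarrow> real"
  assume f: "f \<in> {f \<in> borel_measurable R. \<forall>x\<in>space R. \<bar>f x\<bar> \<le> 1}"
  have "AE x in R. \<bar>cond_exp_diff R F G f x\<bar> \<le> 2"
    using cond_exp_diff_abs_le_AE[OF assms, of f 1] f by auto
  hence "(\<integral>x. \<bar>cond_exp_diff R F G f x\<bar> \<partial>R) \<le> (\<integral>x. 2 \<partial>R)"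
    by (intro integral_mono_AE) (auto intro!: integrable_const_bound[of _ 2])
  also have "\<dots> = 2" by (simp add: prob_space)
  finally show "ennreal (\<integral>x. \<bar>cond_exp_diff R F G f x\<bar> \<partial>R) \<le> 2"
    by (metis ennreal_leI ennreal_numeral)
qed

lemma integral_abs_cond_exp_diff_le:
  assumes "prob_space R" "subalgebra R F" "subalgebra R G" "f \<in> borel_measurable R"
    "\<forall>x\<in>space R. \<bar>f x\<bar> \<le> C" "C > 0"
  shows "(\<integral>x. \<bar>cond_exp_diff R F G f x\<bar> \<partial>R) \<le> C * enn2real (cond_exp_diff_opnorm_inf_1 R F G)"
proof -
  interpret prob_space R by fact
  interpret sF: sigma_finite_subalgebra R F using prob_space_sigma_finite_subalgebra assms by auto
  interpret sG: sigma_finite_subalgebra R G using prob_space_sigma_finite_subalgebra assms by auto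
  define g where "g = (\<lambda>x. f x / C)"
  have gm: "g \<in> borel_measurable R" unfolding g_def using assms(4) by measurable
  have gb: "\<forall>x\<in>space R. \<bar>g x\<bar> \<le> 1" using assms(5,6) by (auto simp: g_def abs_div)
  have "ennreal (\<integral>x. \<bar>cond_exp_diff R F G g x\<bar> \<partial>R) \<le> cond_exp_diff_opnorm_inf_1 R F G"
    unfolding cond_exp_diff_opnorm_inf_1_def by (rule SUP_upper) (use gm gb in auto)
  hence le: "(\<integral>x. \<bar>cond_exp_diff R F G g x\<bar> \<partial>R) \<le> enn2real (cond_exp_diff_opnorm_inf_1 R F G)"
    using cond_exp_diff_opnorm_inf_1_le_2[OF assms(1-3)]
    by (metis enn2real_ennreal enn2real_mono ennreal_numeral_less_top integral_nonneg_AE abs_ge_zero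
        AE_I2 order.strict_trans1)
  have fi: "integrable R f" using assms(4,5) by (intro integrable_const_bound[of _ C]) auto
  have "AE x in R. cond_exp_diff R F G g x = cond_exp_diff R F G f x / C"
    using sF.real_cond_exp_cdiv[OF fi, of C] sG.real_cond_exp_cdiv[OF fi, of C]
    by eventually_elim (simp add: cond_exp_diff_def g_def diff_divide_distrib)
  hence "(\<integral>x. \<bar>cond_exp_diff R F G g x\<bar> \<partial>R) = (\<integral>x. \<bar>cond_exp_diff R F G f x\<bar> \<partial>R) / C"
    using assms(6) by (subst integral_divide_zero[symmetric], intro integral_cong_AE) (auto simp: abs_div)
  thus ?thesis using mult_left_mono[OF le, of C] assms(6) by (simp add: field_simps)
qed

lemma lp_norm_infinity_le_1I:
  assumes "f \<in> borel_measurable R" "AE x in R. \<bar>f x\<bar> \<le> 1"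
  shows "lp_norm R \<infinity> f \<le> 1"
proof -
  have "esssup R (\<lambda>x. ereal \<bar>f x\<bar>) \<le> 1"
    by (rule esssup_I) (use assms in auto)
  hence "e2ennreal (esssup R (\<lambda>x. ereal \<bar>f x\<bar>)) \<le> e2ennreal (ereal 1)"
    by (intro e2ennreal_mono) (simp add: one_ereal_def)
  thus ?thesis by (simp add: lp_norm_def)
qed

lemma lp_norm_infinity_le_1D:
  assumes "lp_norm R \<infinity> f \<le> 1"
  shows "AE x in R. \<bar>f x\<bar> \<le> 1"
proof -
  define S where "S = esssup R (\<lambda>x. ereal \<bar>f x\<bar>)"
  have "e2ennreal S \<le> 1" using assms by (simp add: lp_norm_def S_def)
  have "S \<le> 1"
  proof (cases "S \<le> 0")
    case False
    hence "S = enn2ereal (e2ennreal S)" by (simp add: enn2ereal_e2ennreal)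
    also have "\<dots> \<le> enn2ereal 1" using \<open>e2ennreal S \<le> 1\<close> by (simp add: less_eq_ennreal.rep_eq)
    finally show ?thesis by (simp add: one_ennreal.rep_eq)
  qed (auto intro: order.trans)
  with esssup_AE[of "\<lambda>x. ereal \<bar>f x\<bar>" R] show ?thesis
    unfolding S_def by (auto elim!: eventually_mono dest: order.trans)
qed

lemma lp_norm_finite_eq:
  assumes "q \<noteq> \<infinity>" "integrable R (\<lambda>x. \<bar>h x\<bar> powr enn2real q)"
  shows "lp_norm R q h = ennreal ((\<integral>x. \<bar>h x\<bar> powr enn2real q \<partial>R) powr (1 / enn2real q))"
proof -
  have "(\<integral>\<^sup>+ x. ennreal (\<bar>h x\<bar> powr enn2real q) \<partial>R) = ennreal (\<integral>x. \<bar>h x\<bar> powr enn2real q \<partial>R)"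
    by (rule nn_integral_eq_integral) (use assms in auto)
  thus ?thesis using assms unfolding lp_norm_def Let_def
    by (simp add: integral_nonneg_AE)
qed

lemma lp_norm_finite_le:
  assumes "q \<noteq> \<infinity>" "0 < enn2real q" "integrable R (\<lambda>x. \<bar>h x\<bar> powr enn2real q)"
    "(\<integral>x. \<bar>h x\<bar> powr enn2real q \<partial>R) \<le> B"
  shows "lp_norm R q h \<le> ennreal (B powr (1 / enn2real q))"
  unfolding lp_norm_finite_eq[OF assms(1,3)]
  by (intro ennreal_leI powr_mono2) (use assms in \<open>auto intro: integral_nonneg_AE\<close>)

lemma lp_norm_finite_le_1D:
  assumes "p \<noteq> \<infinity>" "0 < enn2real p" "f \<in> borel_measurable R" "lp_norm R p f \<le> 1"
  shows "integrable R (\<lambda>x. \<bar>f x\<bar> powr enn2real p)" "(\<integral>x. \<bar>f x\<bar> powr enn2real p \<partial>R) \<le> 1"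
proof -
  define I where "I = (\<integral>\<^sup>+ x. ennreal (\<bar>f x\<bar> powr enn2real p) \<partial>R)"
  have "I \<noteq> \<infinity>" using assms(1,4) by (auto simp: lp_norm_def Let_def I_def top_unique)
  hence "enn2real I powr (1 / enn2real p) \<le> 1"
    using assms(1,4) by (auto simp: lp_norm_def Let_def I_def[symmetric])
  hence "enn2real I \<le> 1"
  proof (rule contrapos_pp)
    assume "\<not> enn2real I \<le> 1"
    hence "1 < enn2real I powr (1 / enn2real p)" using assms(2) by (intro gr_one_powr) auto
    thus "\<not> enn2real I powr (1 / enn2real p) \<le> 1" by simp
  qed
  moreover have "I = ennreal (enn2real I)" using \<open>I \<noteq> \<infinity>\<close> by (simp add: less_top)
  ultimately have I_le: "I \<le> 1" by (metis ennreal_leI ennreal_1)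
  show int: "integrable R (\<lambda>x. \<bar>f x\<bar> powr enn2real p)"
    using assms(3) le_less_trans[OF I_le, of \<top>] by (intro integrableI_nonneg) (auto simp: I_def[symmetric])
  have "ennreal (\<integral>x. \<bar>f x\<bar> powr enn2real p \<partial>R) = I"
    unfolding I_def by (rule nn_integral_eq_integral[symmetric]) (use int in auto)
  with I_le show "(\<integral>x. \<bar>f x\<bar> powr enn2real p \<partial>R) \<le> 1"
    by (metis ennreal_1 ennreal_le_iff zero_le_one)
qed

lemma enn2real_ge_1:
  assumes "1 \<le> p" "p \<noteq> (\<infinity>::ennreal)"
  shows "1 \<le> enn2real p"
  using enn2real_mono[of 1 p] assms by (simp add: less_top)

lemma enn2real_strict_mono:
  assumes "(q::ennreal) < p" "p \<noteq> \<infinity>"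
  shows "enn2real q < enn2real p"
proof -
  have "q < \<top>" using assms by (simp add: less_top[symmetric]) (metis assms(1) less_trans top.not_eq_extremum)
  hence "ennreal (enn2real q) < ennreal (enn2real p)" using assms by (simp add: less_top)
  thus ?thesis by (simp add: ennreal_less_iff)
qed

lemma lp_norm_le_1I:
  assumes "prob_space R" "1 \<le> p" "f \<in> borel_measurable R" "\<forall>x\<in>space R. \<bar>f x\<bar> \<le> 1"
  shows "lp_norm R p f \<le> 1"
proof (cases "p = \<infinity>")
  case True
  thus ?thesis using assms(3,4) lp_norm_infinity_le_1I[of f R] by auto
next
  case False
  interpret prob_space R by fact
  have s: "1 \<le> enn2real p" using enn2real_ge_1 assms(2) False .
  have b: "\<forall>x\<in>space R. \<bar>f x\<bar> powr enn2real p \<le> 1"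
    using s assms(4) by (auto intro!: powr_le1)
  have int: "integrable R (\<lambda>x. \<bar>f x\<bar> powr enn2real p)"
    by (rule integrable_const_bound[of _ 1]) (use b assms(3) in auto)
  have "(\<integral>x. \<bar>f x\<bar> powr enn2real p \<partial>R) \<le> (\<integral>x. 1 \<partial>R)"
    by (rule integral_mono) (use int b in auto)
  also have "\<dots> = 1" by (simp add: prob_space)
  finally have "lp_norm R p f \<le> ennreal (1 powr (1 / enn2real p))"
    using s by (intro lp_norm_finite_le False int) auto
  thus ?thesis by simp
qed

lemma powr_le_1_plus_powr:
  assumes "(a::real) \<ge> 0" "0 < s" "s \<le> t"
  shows "a powr s \<le> 1 + a powr t"
proof (cases "a \<le> 1")
  case True
  hence "a powr s \<le> 1" using assms by (intro powr_le1) auto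
  thus ?thesis using powr_ge_zero[of a t] by linarith
next
  case False
  hence "a powr s \<le> a powr t" using assms by (intro powr_mono) auto
  thus ?thesis by simp
qed

lemma integrable_of_integrable_abs_powr:
  fixes f :: "'a \<Rightarrow> real"
  assumes "prob_space R" "f \<in> borel_measurable R" "1 \<le> s" "integrable R (\<lambda>x. \<bar>f x\<bar> powr s)"
  shows "integrable R f"
proof (rule Bochner_Integration.integrable_bound)
  interpret prob_space R by fact
  show "integrable R (\<lambda>x. 1 + \<bar>f x\<bar> powr s)" using assms(4) by simp
  show "AE x in R. norm (f x) \<le> norm (1 + \<bar>f x\<bar> powr s)"
  proof (rule AE_I2)
    fix x show "norm (f x) \<le> norm (1 + \<bar>f x\<bar> powr s)"
      using powr_le_1_plus_powr[of "\<bar>f x\<bar>" 1 s] assms(3) by auto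
  qed
qed fact

lemma integral_abs_le_lp_norm:
  assumes "prob_space R" "h \<in> borel_measurable R" "1 \<le> q" "q \<noteq> \<infinity>"
    "integrable R (\<lambda>x. \<bar>h x\<bar> powr enn2real q)"
  shows "ennreal (\<integral>x. \<bar>h x\<bar> \<partial>R) \<le> lp_norm R q h"
proof -
  interpret prob_space R by fact
  define r where "r = enn2real q"
  have r1: "1 \<le> r" unfolding r_def using enn2real_ge_1 assms(3,4) .
  have hi: "integrable R (\<lambda>x. \<bar>h x\<bar>)"
    using integrable_of_integrable_abs_powr[OF assms(1,2) r1] assms(5) by (simp add: r_def)
  have "\<bar>expectation (\<lambda>x. \<bar>h x\<bar>)\<bar> powr r \<le> expectation (\<lambda>x. \<bar>\<bar>h x\<bar>\<bar> powr r)"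
    by (rule jensens_inequality[where I=UNIV, OF hi _ _ _ convex_on_abs_powr[OF r1]])
       (use assms(5) in \<open>auto simp: r_def\<close>)
  hence "((\<integral>x. \<bar>h x\<bar> \<partial>R) powr r) powr (1 / r) \<le> (\<integral>x. \<bar>h x\<bar> powr r \<partial>R) powr (1 / r)"
    using r1 by (intro powr_mono2) (auto simp: integral_nonneg_AE)
  hence "(\<integral>x. \<bar>h x\<bar> \<partial>R) \<le> (\<integral>x. \<bar>h x\<bar> powr r \<partial>R) powr (1 / r)"
    using r1 by (simp add: powr_powr integral_nonneg_AE)
  thus ?thesis
    unfolding lp_norm_finite_eq[OF assms(4,5)] r_def by (rule ennreal_leI)
qed

section \<open>Comparison with the \<open>L\<^sup>p \<rightarrow> L\<^sup>q\<close> norm\<close>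

lemma cond_exp_diff_opnorm_inf_1_le_opnorm:
  assumes "prob_space R" "subalgebra R F" "subalgebra R G" "1 \<le> q" "q < p"
  shows "cond_exp_diff_opnorm_inf_1 R F G \<le> cond_exp_diff_opnorm R p q F G"
  unfolding cond_exp_diff_opnorm_inf_1_def
proof (rule SUP_least)
  interpret prob_space R by fact
  fix f :: "'a \<Rightarrow> real"
  assume f: "f \<in> {f \<in> borel_measurable R. \<forall>x\<in>space R. \<bar>f x\<bar> \<le> 1}"
  have q: "q \<noteq> \<infinity>" using assms(5) by auto
  hence q1: "1 \<le> enn2real q" using assms(4) by (rule enn2real_ge_1[rotated])
  define h where "h = cond_exp_diff R F G f"
  have hb: "AE x in R. \<bar>h x\<bar> powr enn2real q \<le> 2 powr enn2real q"
    using cond_exp_diff_abs_le_AE[OF assms(1-3), of f 1] f q1 unfolding h_def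
    by (auto elim!: eventually_mono intro: powr_mono2)
  have "ennreal (\<integral>x. \<bar>h x\<bar> \<partial>R) \<le> lp_norm R q h"
    using q hb assms(1,4) by (intro integral_abs_le_lp_norm integrable_const_bound[of _ "2 powr enn2real q"])
      (auto simp: h_def)
  also have "\<dots> \<le> cond_exp_diff_opnorm R p q F G"
    unfolding cond_exp_diff_opnorm_def h_def cond_exp_diff_def
    using f lp_norm_le_1I[OF assms(1), of p f] assms(4,5) by (intro SUP_upper) auto
  finally show "ennreal (\<integral>x. \<bar>cond_exp_diff R F G f x\<bar> \<partial>R) \<le> cond_exp_diff_opnorm R p q F G"
    by (simp add: h_def)
qed

lemma abs_powr_le_bound_mult:
  assumes "(r::real) \<ge> 1" "\<bar>y\<bar> \<le> C"
  shows "\<bar>y\<bar> powr r \<le> C powr (r - 1) * \<bar>y\<bar>"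
proof (cases "y = 0")
  case False
  have "\<bar>y\<bar> powr r = \<bar>y\<bar> powr (r - 1) * \<bar>y\<bar> powr 1"
    using powr_add[of "\<bar>y\<bar>" "r - 1" 1] by simp
  also have "\<dots> \<le> C powr (r - 1) * \<bar>y\<bar>"
    using False assms by (auto intro!: mult_right_mono powr_mono2)
  finally show ?thesis .
qed simp

lemma abs_add_powr_le:
  assumes "(r::real) \<ge> 1"
  shows "\<bar>a + b\<bar> powr r \<le> 2 powr (r - 1) * (\<bar>a\<bar> powr r + \<bar>b\<bar> powr r)"
proof -
  have "\<bar>(1 - 1/2) *\<^sub>R a + (1/2) *\<^sub>R b\<bar> powr r \<le> (1 - 1/2) * \<bar>a\<bar> powr r + (1/2) * \<bar>b\<bar> powr r"
    by (rule convex_onD[OF convex_on_abs_powr[OF assms]]) auto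
  hence "\<bar>a + b\<bar> powr r / 2 powr r \<le> (\<bar>a\<bar> powr r + \<bar>b\<bar> powr r) / 2"
    by (simp add: field_simps powr_divide[symmetric])
  hence "\<bar>a + b\<bar> powr r \<le> 2 powr r * ((\<bar>a\<bar> powr r + \<bar>b\<bar> powr r) / 2)"
    by (simp add: divide_le_eq mult.commute)
  thus ?thesis by (simp add: powr_diff)
qed

lemma abs_powr_add_diff_le:
  assumes "(r::real) \<ge> 1" "\<bar>a\<bar> \<le> C"
  shows "\<bar>a + (b1 - b2)\<bar> powr r \<le>
    2 powr (r - 1) * (C powr (r - 1) * \<bar>a\<bar> + 2 powr (r - 1) * (\<bar>b1\<bar> powr r + \<bar>b2\<bar> powr r))"
proof -
  have "\<bar>a + (b1 + - b2)\<bar> powr r \<le> 2 powr (r - 1) * (\<bar>a\<bar> powr r + \<bar>b1 + - b2\<bar> powr r)"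
    by (rule abs_add_powr_le[OF assms(1)])
  also have "\<dots> \<le> 2 powr (r - 1) * (C powr (r - 1) * \<bar>a\<bar> + 2 powr (r - 1) * (\<bar>b1\<bar> powr r + \<bar>b2\<bar> powr r))"
    using abs_powr_le_bound_mult[OF assms] abs_add_powr_le[OF assms(1), of b1 "- b2"]
    by (intro mult_left_mono add_mono) auto
  finally show ?thesis by simp
qed

lemma abs_clamp_tail_powr_le:
  fixes y M r s :: real
  assumes "1 \<le> r" "r < s" "0 < M"
  shows "\<bar>y - max (- M) (min M y)\<bar> powr r \<le> M powr (r - s) * \<bar>y\<bar> powr s"
proof (cases "\<bar>y\<bar> \<le> M")
  case False
  have "\<bar>y - max (- M) (min M y)\<bar> powr r \<le> \<bar>y\<bar> powr r"
    using assms by (intro powr_mono2) auto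
  also have "\<dots> = \<bar>y\<bar> powr (r - s) * \<bar>y\<bar> powr s"
    using powr_add[of "\<bar>y\<bar>" "r - s" s] by simp
  also have "\<dots> \<le> M powr (r - s) * \<bar>y\<bar> powr s"
    using False assms by (intro mult_right_mono powr_mono2') auto
  finally show ?thesis .
qed auto

lemma integral_powr_cond_exp_diff_le_Linf:
  assumes "prob_space R" "subalgebra R F" "subalgebra R G" "1 \<le> r"
    "f \<in> borel_measurable R" "AE x in R. \<bar>f x\<bar> \<le> 1"
  shows "integrable R (\<lambda>x. \<bar>cond_exp_diff R F G f x\<bar> powr r)"
    "(\<integral>x. \<bar>cond_exp_diff R F G f x\<bar> powr r \<partial>R) \<le>
       2 powr (r - 1) * enn2real (cond_exp_diff_opnorm_inf_1 R F G)"
proof -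
  interpret prob_space R by fact
  interpret sF: sigma_finite_subalgebra R F using prob_space_sigma_finite_subalgebra assms by auto
  interpret sG: sigma_finite_subalgebra R G using prob_space_sigma_finite_subalgebra assms by auto
  note [measurable] = assms(5)
  define h where "h = cond_exp_diff R F G f"
  define f' where "f' = (\<lambda>x. max (-1) (min 1 (f x)))"
  have f'm[measurable]: "f' \<in> borel_measurable R" unfolding f'_def by measurable
  have f'b: "\<forall>x\<in>space R. \<bar>f' x\<bar> \<le> 1" by (auto simp: f'_def)
  have "AE x in R. f x = f' x" using assms(6) by eventually_elim (auto simp: f'_def)
  hence h_eq: "AE x in R. h x = cond_exp_diff R F G f' x"
    using sF.real_cond_exp_cong[OF _ assms(5) f'm] sG.real_cond_exp_cong[OF _ assms(5) f'm]
    by (auto simp: h_def cond_exp_diff_def elim: AE_mp)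
  have b2: "AE x in R. \<bar>cond_exp_diff R F G f' x\<bar> \<le> 2"
    using cond_exp_diff_abs_le_AE[OF assms(1-3) f'm, of 1] f'b by auto
  have hb: "AE x in R. \<bar>h x\<bar> powr r \<le> 2 powr (r - 1) * \<bar>cond_exp_diff R F G f' x\<bar>"
    using h_eq b2 by eventually_elim (use assms(4) in \<open>auto intro: abs_powr_le_bound_mult\<close>)
  show hri: "integrable R (\<lambda>x. \<bar>cond_exp_diff R F G f x\<bar> powr r)"
  proof (rule integrable_const_bound[of _ "2 powr r"])
    show "AE x in R. norm (\<bar>cond_exp_diff R F G f x\<bar> powr r) \<le> 2 powr r"
      using h_eq b2 by eventually_elim (use assms(4) in \<open>auto simp: h_def intro: powr_mono2\<close>)
  qed simp
  have ci: "integrable R (\<lambda>x. \<bar>cond_exp_diff R F G f' x\<bar>)"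
    by (rule integrable_const_bound[of _ 2]) (use b2 in auto)
  have "(\<integral>x. \<bar>h x\<bar> powr r \<partial>R) \<le> (\<integral>x. 2 powr (r - 1) * \<bar>cond_exp_diff R F G f' x\<bar> \<partial>R)"
    by (rule integral_mono_AE[OF hri[folded h_def] _ hb]) (use ci in simp)
  also have "\<dots> = 2 powr (r - 1) * (\<integral>x. \<bar>cond_exp_diff R F G f' x\<bar> \<partial>R)" by simp
  also have "\<dots> \<le> 2 powr (r - 1) * (1 * enn2real (cond_exp_diff_opnorm_inf_1 R F G))"
    by (intro mult_left_mono integral_abs_cond_exp_diff_le[OF assms(1-3) f'm f'b]) auto
  finally show "(\<integral>x. \<bar>cond_exp_diff R F G f x\<bar> powr r \<partial>R) \<le>
      2 powr (r - 1) * enn2real (cond_exp_diff_opnorm_inf_1 R F G)"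
    by (simp add: h_def)
qed

lemma integral_powr_clamp_tail_le:
  fixes f :: "'a \<Rightarrow> real" and r s M :: real
  assumes "1 \<le> r" "r < s" "0 < M" "f \<in> borel_measurable R" "integrable R (\<lambda>x. \<bar>f x\<bar> powr s)"
  shows "integrable R (\<lambda>x. \<bar>f x - max (- M) (min M (f x))\<bar> powr r)"
    "(\<integral>x. \<bar>f x - max (- M) (min M (f x))\<bar> powr r \<partial>R) \<le> M powr (r - s) * (\<integral>x. \<bar>f x\<bar> powr s \<partial>R)"
proof -
  note [measurable] = assms(4)
  have bound: "\<bar>f x - max (- M) (min M (f x))\<bar> powr r \<le> M powr (r - s) * \<bar>f x\<bar> powr s" for x
    using abs_clamp_tail_powr_le[OF assms(1-3)] .
  show int: "integrable R (\<lambda>x. \<bar>f x - max (- M) (min M (f x))\<bar> powr r)"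
    by (rule Bochner_Integration.integrable_bound[OF integrable_mult_right[OF assms(5), of "M powr (r - s)"]])
       (use bound in auto)
  have "(\<integral>x. \<bar>f x - max (- M) (min M (f x))\<bar> powr r \<partial>R) \<le> (\<integral>x. M powr (r - s) * \<bar>f x\<bar> powr s \<partial>R)"
    by (rule integral_mono[OF int]) (use assms(5) bound in auto)
  thus "(\<integral>x. \<bar>f x - max (- M) (min M (f x))\<bar> powr r \<partial>R) \<le> M powr (r - s) * (\<integral>x. \<bar>f x\<bar> powr s \<partial>R)"
    by simp
qed

lemma integral_powr_real_cond_exp_clamp_tail_le:
  fixes f :: "'a \<Rightarrow> real"
  assumes "prob_space R" "subalgebra R F" "1 \<le> r" "r < s" "0 < M"
    "f \<in> borel_measurable R" "integrable R (\<lambda>x. \<bar>f x\<bar> powr s)" "(\<integral>x. \<bar>f x\<bar> powr s \<partial>R) \<le> 1"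
  defines "fb \<equiv> \<lambda>x. f x - max (- M) (min M (f x))"
  shows "integrable R (\<lambda>x. \<bar>real_cond_exp R F fb x\<bar> powr r)"
    "(\<integral>x. \<bar>real_cond_exp R F fb x\<bar> powr r \<partial>R) \<le> M powr (r - s)"
proof -
  interpret prob_space R by fact
  note [measurable] = assms(6)
  have "integrable R f"
    by (rule integrable_of_integrable_abs_powr[OF assms(1,6) _ assms(7)]) (use assms(3,4) in simp)
  moreover have "integrable R (\<lambda>x. max (- M) (min M (f x)))"
    by (rule integrable_const_bound[of _ M]) (use assms(5) in auto)
  ultimately have fbi: "integrable R fb" unfolding fb_def by auto
  have fbri: "integrable R (\<lambda>x. \<bar>fb x\<bar> powr r)"
    and fbr: "(\<integral>x. \<bar>fb x\<bar> powr r \<partial>R) \<le> M powr (r - s)"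
    using integral_powr_clamp_tail_le[OF assms(3-7)] mult_left_mono[OF assms(8), of "M powr (r - s)"]
    by (auto simp: fb_def)
  have "(\<lambda>x::real. \<bar>x\<bar> powr r) \<in> borel_measurable borel" by measurable
  note jensen = real_cond_exp_jensen_integral[OF assms(1,2) fbi fbri convex_on_abs_powr[OF assms(3)] this]
  show "integrable R (\<lambda>x. \<bar>real_cond_exp R F fb x\<bar> powr r)" by (rule jensen(1))
  show "(\<integral>x. \<bar>real_cond_exp R F fb x\<bar> powr r \<partial>R) \<le> M powr (r - s)" using jensen(2) fbr by simp
qed

lemma integral_powr_cond_exp_diff_le_Lp:
  assumes "prob_space R" "subalgebra R F" "subalgebra R G" "1 \<le> r" "r < s" "0 < M"
    "f \<in> borel_measurable R" "integrable R (\<lambda>x. \<bar>f x\<bar> powr s)" "(\<integral>x. \<bar>f x\<bar> powr s \<partial>R) \<le> 1"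
  shows "integrable R (\<lambda>x. \<bar>cond_exp_diff R F G f x\<bar> powr r)"
    "(\<integral>x. \<bar>cond_exp_diff R F G f x\<bar> powr r \<partial>R) \<le>
       2 powr (r - 1) * ((2*M) powr (r - 1) * M * enn2real (cond_exp_diff_opnorm_inf_1 R F G)
         + 2 powr r * M powr (r - s))"
proof -
  interpret prob_space R by fact
  interpret sF: sigma_finite_subalgebra R F using prob_space_sigma_finite_subalgebra assms by auto
  interpret sG: sigma_finite_subalgebra R G using prob_space_sigma_finite_subalgebra assms by auto
  note [measurable] = assms(7)
  define c where "c = enn2real (cond_exp_diff_opnorm_inf_1 R F G)"
  define h where "h = cond_exp_diff R F G f"
  define fs where "fs = (\<lambda>x. max (-M) (min M (f x)))"
  define fb where "fb = (\<lambda>x. f x - max (- M) (min M (f x)))"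
  define CF where "CF = real_cond_exp R F fb"
  define CG where "CG = real_cond_exp R G fb"
  have fsm[measurable]: "fs \<in> borel_measurable R" unfolding fs_def by measurable
  have fsb: "\<forall>x\<in>space R. \<bar>fs x\<bar> \<le> M" using assms(6) by (auto simp: fs_def)
  have fsi: "integrable R fs" by (rule integrable_const_bound[of _ M]) (use fsb in auto)
  have fbi: "integrable R fb"
    using integrable_of_integrable_abs_powr[OF assms(1,7) _ assms(8)] fsi assms(4,5)
    by (simp add: fb_def fs_def)
  note tail_F = integral_powr_real_cond_exp_clamp_tail_le[OF assms(1,2,4-9), folded fb_def]
  note tail_G = integral_powr_real_cond_exp_clamp_tail_le[OF assms(1,3,4-9), folded fb_def]
  have "AE x in R. h x = cond_exp_diff R F G fs x + (CF x - CG x)"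
    using sF.real_cond_exp_add[OF fsi fbi] sG.real_cond_exp_add[OF fsi fbi]
    by eventually_elim (simp add: h_def cond_exp_diff_def CF_def CG_def fb_def fs_def)
  moreover have sb: "AE x in R. \<bar>cond_exp_diff R F G fs x\<bar> \<le> 2 * M"
    using cond_exp_diff_abs_le_AE[OF assms(1-3) fsm, of M] fsb by auto
  ultimately have hg: "AE x in R. \<bar>h x\<bar> powr r \<le> 2 powr (r - 1) * ((2*M) powr (r - 1) *
      \<bar>cond_exp_diff R F G fs x\<bar> + 2 powr (r - 1) * (\<bar>CF x\<bar> powr r + \<bar>CG x\<bar> powr r))"
    by eventually_elim (simp add: abs_powr_add_diff_le[OF assms(4)])
  have si: "integrable R (\<lambda>x. \<bar>cond_exp_diff R F G fs x\<bar>)"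
    by (rule integrable_const_bound[of _ "2*M"]) (use sb in auto)
  have gi: "integrable R (\<lambda>x. 2 powr (r - 1) * ((2*M) powr (r - 1) *
      \<bar>cond_exp_diff R F G fs x\<bar> + 2 powr (r - 1) * (\<bar>CF x\<bar> powr r + \<bar>CG x\<bar> powr r)))"
    using si tail_F(1) tail_G(1) by (simp add: CF_def CG_def)
  show hri: "integrable R (\<lambda>x. \<bar>cond_exp_diff R F G f x\<bar> powr r)"
    by (rule Bochner_Integration.integrable_bound[OF gi]) (use hg in \<open>auto simp: h_def\<close>)
  have "(\<integral>x. \<bar>h x\<bar> powr r \<partial>R) \<le> 2 powr (r - 1) * ((2*M) powr (r - 1) *
      (\<integral>x. \<bar>cond_exp_diff R F G fs x\<bar> \<partial>R) +
      2 powr (r - 1) * ((\<integral>x. \<bar>CF x\<bar> powr r \<partial>R) + (\<integral>x. \<bar>CG x\<bar> powr r \<partial>R)))"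
    using integral_mono_AE[OF hri[folded h_def] gi hg] si tail_F(1) tail_G(1)
    by (simp add: CF_def CG_def)
  also have "\<dots> \<le> 2 powr (r - 1) * ((2*M) powr (r - 1) * (M * c) +
      2 powr (r - 1) * (M powr (r - s) + M powr (r - s)))"
    using integral_abs_cond_exp_diff_le[OF assms(1-3) fsm fsb assms(6)] tail_F(2) tail_G(2)
    by (intro mult_left_mono add_mono) (auto simp: c_def CF_def CG_def)
  also have "\<dots> = 2 powr (r - 1) * ((2*M) powr (r - 1) * M * c + 2 powr r * M powr (r - s))"
    using powr_add[of 2 "r - 1" 1] by (simp add: algebra_simps)
  finally show "(\<integral>x. \<bar>cond_exp_diff R F G f x\<bar> powr r \<partial>R) \<le>
      2 powr (r - 1) * ((2*M) powr (r - 1) * M * enn2real (cond_exp_diff_opnorm_inf_1 R F G)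
        + 2 powr r * M powr (r - s))"
    by (simp add: h_def c_def)
qed

lemma cond_exp_diff_opnorm_less:
  assumes "q \<noteq> \<infinity>" "r = enn2real q" "1 \<le> r" "0 < e" "0 \<le> \<beta>" "\<beta> < e powr r"
    and bound: "\<And>f. f \<in> borel_measurable R \<Longrightarrow> lp_norm R p f \<le> 1 \<Longrightarrow>
      integrable R (\<lambda>x. \<bar>cond_exp_diff R F G f x\<bar> powr r) \<and>
      (\<integral>x. \<bar>cond_exp_diff R F G f x\<bar> powr r \<partial>R) \<le> \<beta>"
  shows "cond_exp_diff_opnorm R p q F G < ennreal e"
proof -
  have "cond_exp_diff_opnorm R p q F G \<le> ennreal (\<beta> powr (1 / r))"
    unfolding cond_exp_diff_opnorm_def
  proof (rule SUP_least)
    fix f assume "f \<in> {f \<in> borel_measurable R. lp_norm R p f \<le> 1}"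
    hence "lp_norm R q (cond_exp_diff R F G f) \<le> ennreal (\<beta> powr (1 / r))"
      using assms(1,3) bound[of f] unfolding assms(2) by (intro lp_norm_finite_le) auto
    thus "lp_norm R q (\<lambda>x. real_cond_exp R F f x - real_cond_exp R G f x) \<le> ennreal (\<beta> powr (1 / r))"
      by (simp add: cond_exp_diff_def)
  qed
  also have "\<beta> powr (1 / r) < (e powr r) powr (1 / r)"
    using assms(3,5,6) by (intro powr_less_mono2) auto
  hence "ennreal (\<beta> powr (1 / r)) < ennreal e"
    using assms(3,4) by (simp add: powr_powr ennreal_lessI)
  finally show ?thesis .
qed

lemma cond_exp_diff_opnorm_tendsto_0_Linf:
  assumes "prob_space R" "\<And>n. subalgebra R (B n)" "1 \<le> q" "q \<noteq> \<infinity>"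
    "(\<lambda>n. cond_exp_diff_opnorm_inf_1 R (B n) (B 0)) \<longlonglongrightarrow> 0"
  shows "(\<lambda>n. cond_exp_diff_opnorm R \<infinity> q (B n) (B 0)) \<longlonglongrightarrow> 0"
proof (rule tendsto_zero_ennreal)
  fix e :: real assume e: "0 < e"
  define r where "r = enn2real q"
  have r1: "1 \<le> r" unfolding r_def using enn2real_ge_1[OF assms(3,4)] .
  define c where "c = (\<lambda>n. enn2real (cond_exp_diff_opnorm_inf_1 R (B n) (B 0)))"
  have "c \<longlonglongrightarrow> 0" unfolding c_def using tendsto_enn2real[of _ 0] assms(5) by simp
  hence "(\<lambda>n. 2 powr (r - 1) * c n) \<longlonglongrightarrow> 0" using tendsto_mult_right_zero by blast
  from order_tendstoD(2)[OF this, of "e powr r"]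
  have "eventually (\<lambda>n. 2 powr (r - 1) * c n < e powr r) sequentially" using e by simp
  thus "eventually (\<lambda>n. cond_exp_diff_opnorm R \<infinity> q (B n) (B 0) < ennreal e) sequentially"
  proof eventually_elim
    case (elim n)
    show ?case
    proof (rule cond_exp_diff_opnorm_less[OF assms(4) r_def r1 e _ elim])
      fix f assume f: "f \<in> borel_measurable R" "lp_norm R \<infinity> f \<le> 1"
      thus "integrable R (\<lambda>x. \<bar>cond_exp_diff R (B n) (B 0) f x\<bar> powr r) \<and>
          (\<integral>x. \<bar>cond_exp_diff R (B n) (B 0) f x\<bar> powr r \<partial>R) \<le> 2 powr (r - 1) * c n"
        using integral_powr_cond_exp_diff_le_Linf[OF assms(1,2,2) r1 f(1) lp_norm_infinity_le_1D[OF f(2)]]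
        by (simp add: c_def)
    qed (simp add: c_def)
  qed
qed

lemma cond_exp_diff_opnorm_tendsto_0_Lp:
  assumes "prob_space R" "\<And>n. subalgebra R (B n)" "1 \<le> q" "q < p" "p \<noteq> \<infinity>"
    "(\<lambda>n. cond_exp_diff_opnorm_inf_1 R (B n) (B 0)) \<longlonglongrightarrow> 0"
  shows "(\<lambda>n. cond_exp_diff_opnorm R p q (B n) (B 0)) \<longlonglongrightarrow> 0"
proof (rule tendsto_zero_ennreal)
  fix e :: real assume e: "0 < e"
  have q: "q \<noteq> \<infinity>" using assms(4) by auto
  define r where "r = enn2real q"
  define s where "s = enn2real p"
  have r1: "1 \<le> r" unfolding r_def using enn2real_ge_1[OF assms(3) q] .
  have rs: "r < s" unfolding r_def s_def using enn2real_strict_mono[OF assms(4,5)] .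
  define c where "c = (\<lambda>n. enn2real (cond_exp_diff_opnorm_inf_1 R (B n) (B 0)))"
  have "((\<lambda>M::real. 2 powr (r - 1) * (2 powr r * M powr (r - s))) \<longlongrightarrow> 0) at_top"
    using rs by (intro tendsto_mult_right_zero tendsto_neg_powr filterlim_ident) auto
  from order_tendstoD(2)[OF this, of "e powr r / 2"]
  have "eventually (\<lambda>M. 2 powr (r - 1) * (2 powr r * M powr (r - s)) < e powr r / 2) at_top"
    using e by simp
  hence "eventually (\<lambda>M. 2 powr (r - 1) * (2 powr r * M powr (r - s)) < e powr r / 2 \<and> 0 < M) at_top"
    by (intro eventually_conj eventually_gt_at_top)
  then obtain M where M: "2 powr (r - 1) * (2 powr r * M powr (r - s)) < e powr r / 2" "0 < M"
    by (metis (lifting) eventually_at_top_linorder order.refl)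
  define K where "K = 2 powr (r - 1) * ((2*M) powr (r - 1) * M)"
  have "c \<longlonglongrightarrow> 0" unfolding c_def using tendsto_enn2real[of _ 0] assms(6) by simp
  hence "(\<lambda>n. K * c n) \<longlonglongrightarrow> 0" using tendsto_mult_right_zero by blast
  from order_tendstoD(2)[OF this, of "e powr r / 2"]
  have "eventually (\<lambda>n. K * c n < e powr r / 2) sequentially" using e by simp
  thus "eventually (\<lambda>n. cond_exp_diff_opnorm R p q (B n) (B 0) < ennreal e) sequentially"
  proof eventually_elim
    case (elim n)
    define \<beta> where "\<beta> = 2 powr (r - 1) * ((2*M) powr (r - 1) * M * c n + 2 powr r * M powr (r - s))"
    have "\<beta> = K * c n + 2 powr (r - 1) * (2 powr r * M powr (r - s))"
      by (simp add: \<beta>_def K_def algebra_simps)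
    hence "\<beta> < e powr r" using elim M(1) by linarith
    moreover have "0 \<le> \<beta>" using M(2) by (simp add: \<beta>_def c_def)
    ultimately show ?case
    proof (intro cond_exp_diff_opnorm_less[OF q r_def r1 e])
      fix f assume f: "f \<in> borel_measurable R" "lp_norm R p f \<le> 1"
      have "0 < enn2real p" using r1 rs by (simp add: s_def)
      note f_Lp = lp_norm_finite_le_1D[OF assms(5) this f]
      show "integrable R (\<lambda>x. \<bar>cond_exp_diff R (B n) (B 0) f x\<bar> powr r) \<and>
          (\<integral>x. \<bar>cond_exp_diff R (B n) (B 0) f x\<bar> powr r \<partial>R) \<le> \<beta>"
        using integral_powr_cond_exp_diff_le_Lp[OF assms(1,2,2) r1 rs M(2) f(1) f_Lp[folded s_def]]
        by (simp add: \<beta>_def c_def)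
    qed
  qed
qed

lemma cond_exp_diff_opnorm_tendsto_0:
  assumes "prob_space R" "\<And>n. subalgebra R (B n)" "1 \<le> q" "q < p"
    "(\<lambda>n. cond_exp_diff_opnorm_inf_1 R (B n) (B 0)) \<longlonglongrightarrow> 0"
  shows "(\<lambda>n. cond_exp_diff_opnorm R p q (B n) (B 0)) \<longlonglongrightarrow> 0"
proof (cases "p = \<infinity>")
  case True
  have "q \<noteq> \<infinity>" using assms(4) by auto
  thus ?thesis using cond_exp_diff_opnorm_tendsto_0_Linf[OF assms(1-3) _ assms(5)] True by simp
qed (rule cond_exp_diff_opnorm_tendsto_0_Lp[OF assms(1-4) _ assms(5)])

lemma cond_exp_diff_opnorm_tendsto_0_iff:
  assumes "prob_space R" "\<And>n. subalgebra R (B n)" "1 \<le> q" "q < p"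
  shows "(\<lambda>n. cond_exp_diff_opnorm R p q (B n) (B 0)) \<longlonglongrightarrow> 0 \<longleftrightarrow>
         (\<lambda>n. cond_exp_diff_opnorm_inf_1 R (B n) (B 0)) \<longlonglongrightarrow> 0"
proof
  assume lim: "(\<lambda>n. cond_exp_diff_opnorm R p q (B n) (B 0)) \<longlonglongrightarrow> 0"
  show "(\<lambda>n. cond_exp_diff_opnorm_inf_1 R (B n) (B 0)) \<longlonglongrightarrow> 0"
    by (rule tendsto_sandwich[OF _ _ tendsto_const lim])
      (simp_all add: cond_exp_diff_opnorm_inf_1_le_opnorm[OF assms(1,2,2,3,4)])
qed (rule cond_exp_diff_opnorm_tendsto_0[OF assms])

section \<open>Change of measure\<close>

lemma abs_div_diff_le:
  fixes a b u v d :: real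
  assumes ab: "\<bar>a\<bar> \<le> u" "\<bar>b\<bar> \<le> v" and v: "0 < v" and d: "0 < d"
  shows "\<bar>a/u - b/v\<bar> \<le> 4 * min 1 ((\<bar>a - b\<bar> + \<bar>u - v\<bar>)/d) + 2 * (if v < 2*d then 1 else 0)"
proof -
  define Y where "Y = \<bar>a - b\<bar> + \<bar>u - v\<bar>"
  have au: "\<bar>a/u\<bar> \<le> 1" using ab by (cases "u = 0") (auto simp: abs_div)
  have bv: "\<bar>b/v\<bar> \<le> 1" using ab v by (simp add: abs_div)
  have le_2: "\<bar>a/u - b/v\<bar> \<le> 2" using au bv by linarith
  have Y0: "0 \<le> Y" unfolding Y_def by simp
  consider "v < 2*d" | "d \<le> Y" | "2*d \<le> v" "Y < d" by linarith
  thus ?thesis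
  proof cases
    case 1
    have "0 \<le> 4 * min 1 ((\<bar>a - b\<bar> + \<bar>u - v\<bar>)/d)" using d by simp
    thus ?thesis using 1 le_2 by simp
  next
    case 2
    hence "min 1 ((\<bar>a - b\<bar> + \<bar>u - v\<bar>)/d) = 1" using d by (simp add: Y_def)
    thus ?thesis using le_2 by simp
  next
    case 3
    have u: "d < u" using 3 unfolding Y_def by linarith
    have "a/u - b/v = (a - b)/u + (b/v) * (v - u)/u" using u v d by (simp add: field_simps)
    hence "\<bar>a/u - b/v\<bar> \<le> \<bar>a - b\<bar>/u + \<bar>b/v\<bar> * \<bar>v - u\<bar>/u"
      using abs_triangle_ineq[of "(a - b)/u" "(b/v) * (v - u)/u"] u d by (simp add: abs_div abs_mult)
    also have "\<dots> \<le> \<bar>a - b\<bar>/u + \<bar>v - u\<bar>/u"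
      using bv u d by (intro add_left_mono divide_right_mono mult_left_le_one_le) auto
    also have "\<dots> = Y/u" unfolding Y_def by (simp add: add_divide_distrib abs_minus_commute)
    also have "\<dots> \<le> Y/d" using u d Y0 by (intro divide_left_mono) auto
    also have "\<dots> = min 1 (Y/d)" using 3 d by simp
    also have "\<dots> \<le> 4 * min 1 (Y/d)" using Y0 d by simp
    finally show ?thesis using 3 unfolding Y_def by simp
  qed
qed

lemma mult_le_truncation:
  fixes z w C K :: real
  assumes "0 \<le> z" "0 \<le> w" "w \<le> C" "0 < K"
  shows "z * w \<le> 2*K*w + 2*C*(z - min z K)"
proof (cases "z \<le> 2*K")
  case True
  hence "z * w \<le> 2*K*w" using assms by (intro mult_right_mono) auto
  moreover have "0 \<le> 2*C*(z - min z K)" using assms by simp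
  ultimately show ?thesis by linarith
next
  case False
  have "z * w \<le> z * C" using assms by (intro mult_left_mono) auto
  also have "\<dots> \<le> 2*C*(z - min z K)"
  proof -
    have "C * (2*K) \<le> C * z" using False assms by (intro mult_left_mono) auto
    thus ?thesis using False assms by (simp add: algebra_simps)
  qed
  moreover have "0 \<le> 2*K*w" using assms by simp
  ultimately show ?thesis by linarith
qed

locale prob_density =
  fixes P :: "'a measure" and Z :: "'a \<Rightarrow> real"
  assumes prob: "prob_space P"
    and Z_measurable[measurable]: "Z \<in> borel_measurable P"
    and Z_nonneg: "\<And>x. 0 \<le> Z x"
    and Z_integrable: "integrable P Z"
    and density_prob: "prob_space (density P (\<lambda>x. ennreal (Z x)))"
begin

abbreviation "Q \<equiv> density P (\<lambda>x. ennreal (Z x))"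

sublocale P: prob_space P by (rule prob)
sublocale Q: prob_space Q by (rule density_prob)

lemma AE_density_if_AE: "AE x in P. R x \<Longrightarrow> AE x in Q. R x"
  by (subst AE_density) (auto elim: eventually_mono)

lemma integral_density_eq: "g \<in> borel_measurable P \<Longrightarrow> (\<integral>x. g x \<partial>Q) = (\<integral>x. Z x * g x \<partial>P)"
  by (subst integral_density) (auto simp: Z_nonneg)

lemma subalgebra_density: "subalgebra P F \<Longrightarrow> subalgebra Q F"
  by (simp add: subalgebra_def)

lemma integrable_Z_mult:
  assumes "f \<in> borel_measurable P" "\<forall>x\<in>space P. \<bar>f x\<bar> \<le> 1"
  shows "integrable P (\<lambda>x. Z x * f x)"
  by (rule Bochner_Integration.integrable_bound[OF Z_integrable])
     (use assms Z_nonneg in \<open>auto simp: abs_mult intro!: mult_left_le\<close>)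

lemma real_cond_exp_Z_mult_abs_le:
  assumes F: "subalgebra P F" and f: "f \<in> borel_measurable P" "\<forall>x\<in>space P. \<bar>f x\<bar> \<le> 1"
  shows "AE x in P. \<bar>real_cond_exp P F (\<lambda>x. Z x * f x) x\<bar> \<le> real_cond_exp P F Z x"
proof -
  interpret sigma_finite_subalgebra P F using prob_space_sigma_finite_subalgebra[OF prob F] .
  note Zf_int = integrable_Z_mult[OF f]
  have "AE x in P. real_cond_exp P F (\<lambda>x. Z x * f x) x \<le> real_cond_exp P F Z x"
    by (rule real_cond_exp_mono[OF _ Zf_int Z_integrable])
       (use f Z_nonneg in \<open>auto intro!: mult_left_le simp: abs_le_iff\<close>)
  moreover have "AE x in P. real_cond_exp P F (\<lambda>x. (-1) * Z x) x \<le> real_cond_exp P F (\<lambda>x. Z x * f x) x"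
  proof (rule real_cond_exp_mono[OF _ _ Zf_int], rule AE_I2)
    fix x assume "x \<in> space P"
    hence "Z x * (-1) \<le> Z x * f x" using f Z_nonneg by (intro mult_left_mono) auto
    thus "(-1) * Z x \<le> Z x * f x" by simp
  qed (use Z_integrable in simp)
  moreover have "AE x in P. real_cond_exp P F (\<lambda>x. (-1) * Z x) x = (-1) * real_cond_exp P F Z x"
    by (rule real_cond_exp_cmult[OF Z_integrable])
  ultimately show ?thesis by eventually_elim auto
qed

lemma real_cond_exp_Z_pos_AE_density:
  assumes F: "subalgebra P F"
  shows "AE x in Q. 0 < real_cond_exp P F Z x"
proof -
  interpret sP: sigma_finite_subalgebra P F using prob_space_sigma_finite_subalgebra[OF prob F] .
  define D where "D = real_cond_exp P F Z"
  have DF[measurable]: "D \<in> borel_measurable F" unfolding D_def by simp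
  define A where "A = {x \<in> space P. D x \<le> 0}"
  have "{x \<in> space F. D x \<le> 0} \<in> sets F" by measurable
  moreover have "space F = space P" using F by (simp add: subalgebra_def)
  ultimately have AF: "A \<in> sets F" unfolding A_def by simp
  have AP[measurable]: "A \<in> sets P" using AF F by (auto simp: subalgebra_def)
  have "(\<integral>x\<in>A. Z x \<partial>P) = (\<integral>x\<in>A. D x \<partial>P)" unfolding D_def by (rule sP.real_cond_exp_intA[OF Z_integrable AF])
  also have "\<dots> \<le> 0"
    using integral_nonneg_AE[of "\<lambda>x. - (indicator A x *\<^sub>R D x)" P]
    by (auto simp: set_lebesgue_integral_def A_def indicator_def)
  finally have "(\<integral>x. indicator A x * Z x \<partial>P) \<le> 0" by (simp add: set_lebesgue_integral_def)
  moreover have "0 \<le> (\<integral>x. indicator A x * Z x \<partial>P)" by (rule integral_nonneg_AE) (simp add: Z_nonneg)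
  moreover have "integrable P (\<lambda>x. indicator A x * Z x)"
    by (rule Bochner_Integration.integrable_bound[OF Z_integrable]) (auto simp: indicator_def Z_nonneg)
  ultimately have "AE x in P. indicator A x * Z x = 0"
    using integral_nonneg_eq_0_iff_AE[of P "\<lambda>x. indicator A x * Z x"] by (simp add: Z_nonneg)
  hence "AE x in P. x \<in> A \<longrightarrow> ennreal (Z x) = 0"
    by (auto elim!: eventually_mono simp: indicator_def)
  hence "A \<in> null_sets Q" by (subst null_sets_density_iff) auto
  hence "AE x in Q. x \<notin> A" by (rule AE_not_in)
  thus ?thesis using AE_space[of Q] unfolding A_def D_def by eventually_elim auto
qed

lemma real_cond_exp_density:
  assumes F: "subalgebra P F" and f: "f \<in> borel_measurable P" "\<forall>x\<in>space P. \<bar>f x\<bar> \<le> 1"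
  shows "AE x in Q. real_cond_exp Q F f x =
           real_cond_exp P F (\<lambda>x. Z x * f x) x / real_cond_exp P F Z x"
proof -
  interpret sP: sigma_finite_subalgebra P F using prob_space_sigma_finite_subalgebra[OF prob F] .
  interpret sQ: sigma_finite_subalgebra Q F
    using prob_space_sigma_finite_subalgebra[OF density_prob subalgebra_density[OF F]] .
  note [measurable] = f(1)
  define N where "N = real_cond_exp P F (\<lambda>x. Z x * f x)"
  define D where "D = real_cond_exp P F Z"
  define g where "g = (\<lambda>x. N x / D x)"
  have NF[measurable]: "N \<in> borel_measurable F" unfolding N_def by simp
  have DF[measurable]: "D \<in> borel_measurable F" unfolding D_def by simp
  have gF[measurable]: "g \<in> borel_measurable F" unfolding g_def by measurable
  have [measurable]: "g \<in> borel_measurable P" "N \<in> borel_measurable P" "D \<in> borel_measurable P"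
    using measurable_from_subalg[OF F] NF DF gF by blast+
  have ND: "AE x in P. \<bar>N x\<bar> \<le> D x" unfolding N_def D_def by (rule real_cond_exp_Z_mult_abs_le[OF F f])
  have gb: "AE x in P. \<bar>g x\<bar> \<le> 1"
    using ND by eventually_elim (auto simp: g_def abs_div divide_le_eq_1)
  have gN: "AE x in P. g x * D x = N x"
    using ND by eventually_elim (auto simp: g_def)
  have "AE x in Q. real_cond_exp Q F f x = g x"
  proof (rule sQ.real_cond_exp_charact)
    show "integrable Q f" by (rule Q.integrable_const_bound[of _ 1]) (use f in auto)
    show "integrable Q g" by (rule Q.integrable_const_bound[of _ 1]) (use AE_density_if_AE[OF gb] in auto)
    show "g \<in> borel_measurable F" by (rule gF)
    fix A assume A: "A \<in> sets F"
    have AP[measurable]: "A \<in> sets P" using A F by (auto simp: subalgebra_def)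
    have "(\<integral>x\<in>A. f x \<partial>Q) = (\<integral>x\<in>A. Z x * f x \<partial>P)"
      unfolding set_lebesgue_integral_def by (subst integral_density_eq) (auto simp: mult_ac)
    also have "\<dots> = (\<integral>x\<in>A. N x \<partial>P)" unfolding N_def by (rule sP.real_cond_exp_intA[OF integrable_Z_mult[OF f] A])
    finally have int_f: "(\<integral>x\<in>A. f x \<partial>Q) = (\<integral>x\<in>A. N x \<partial>P)" .
    have iAg: "integrable P (\<lambda>x. (indicator A x * g x) * Z x)"
      by (rule Bochner_Integration.integrable_bound[OF Z_integrable])
         (use gb Z_nonneg in \<open>auto simp: abs_mult indicator_def elim!: eventually_mono intro!: mult_left_le_one_le\<close>)
    have "(\<integral>x\<in>A. g x \<partial>Q) = (\<integral>x. (indicator A x * g x) * Z x \<partial>P)"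
      unfolding set_lebesgue_integral_def by (subst integral_density_eq) (auto simp: mult_ac)
    also have "\<dots> = (\<integral>x. (indicator A x * g x) * D x \<partial>P)"
      unfolding D_def by (rule sP.real_cond_exp_intg(2)[symmetric]) (use iAg A in auto)
    also have "\<dots> = (\<integral>x\<in>A. N x \<partial>P)"
      unfolding set_lebesgue_integral_def
      by (rule integral_cong_AE) (use gN in \<open>auto elim!: eventually_mono simp: indicator_def\<close>)
    finally show "(\<integral>x\<in>A. f x \<partial>Q) = (\<integral>x\<in>A. g x \<partial>Q)" using int_f by simp
  qed
  thus ?thesis by (simp add: g_def N_def D_def)
qed

definition density_tail :: "real \<Rightarrow> real" where
  "density_tail K = (\<integral>x. Z x - min (Z x) K \<partial>P)"

lemma integrable_density_tail: "0 \<le> K \<Longrightarrow> integrable P (\<lambda>x. Z x - min (Z x) K)"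
  by (rule Bochner_Integration.integrable_bound[OF Z_integrable]) (auto simp: Z_nonneg)

lemma density_tail_small:
  assumes "0 < e"
  shows "\<exists>K>0. density_tail K < e"
proof -
  have "(\<lambda>m. density_tail (real m)) \<longlonglongrightarrow> (\<integral>x. 0 \<partial>P)"
    unfolding density_tail_def
  proof (rule integral_dominated_convergence[where w=Z])
    show "AE x in P. (\<lambda>i. Z x - min (Z x) (real i)) \<longlonglongrightarrow> 0"
    proof (rule AE_I2)
      fix x
      obtain N where "Z x \<le> real N" using real_arch_simple by blast
      hence "eventually (\<lambda>i. Z x - min (Z x) (real i) = 0) sequentially"
        unfolding eventually_sequentially by (auto intro!: exI[of _ N])
      thus "(\<lambda>i. Z x - min (Z x) (real i)) \<longlonglongrightarrow> 0" by (rule tendsto_eventually)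
    qed
    show "\<And>i. AE x in P. norm (Z x - min (Z x) (real i)) \<le> Z x"
      using Z_nonneg by (intro AE_I2) auto
  qed (simp_all add: Z_integrable)
  hence "eventually (\<lambda>m. density_tail (real m) < e \<and> 1 \<le> m) sequentially"
    using assms by (intro eventually_conj order_tendstoD(2) eventually_ge_at_top) auto
  then obtain m where "density_tail (real m) < e" "1 \<le> m"
    by (metis (lifting) eventually_sequentially order.refl)
  thus ?thesis by (intro exI[of _ "real m"]) auto
qed

lemma integral_abs_cond_exp_diff_Z_mult_le:
  assumes F: "subalgebra P F" and G: "subalgebra P G"
    and g[measurable]: "g \<in> borel_measurable P" and g_bound: "\<forall>x\<in>space P. \<bar>g x\<bar> \<le> 1" and K: "0 < K"
  shows "(\<integral>x. \<bar>cond_exp_diff P F G (\<lambda>x. Z x * g x) x\<bar> \<partial>P) \<le>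
    K * enn2real (cond_exp_diff_opnorm_inf_1 P F G) + 2 * density_tail K"
proof -
  interpret sF: sigma_finite_subalgebra P F using prob_space_sigma_finite_subalgebra[OF prob F] .
  interpret sG: sigma_finite_subalgebra P G using prob_space_sigma_finite_subalgebra[OF prob G] .
  define a where "a = (\<lambda>x. min (Z x) K * g x)"
  define b where "b = (\<lambda>x. (Z x - min (Z x) K) * g x)"
  have am[measurable]: "a \<in> borel_measurable P" unfolding a_def by measurable
  have ab: "\<forall>x\<in>space P. \<bar>a x\<bar> \<le> K"
  proof
    fix x assume "x \<in> space P"
    hence "\<bar>min (Z x) K\<bar> * \<bar>g x\<bar> \<le> K * 1"
      using g_bound Z_nonneg[of x] K by (intro mult_mono) auto
    thus "\<bar>a x\<bar> \<le> K" by (simp add: a_def abs_mult)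
  qed
  have bb: "\<bar>b x\<bar> \<le> Z x - min (Z x) K" if "x \<in> space P" for x
    using g_bound that mult_left_mono[of "\<bar>g x\<bar>" 1 "Z x - min (Z x) K"] by (auto simp: b_def abs_mult)
  have ai: "integrable P a" by (rule P.integrable_const_bound[of _ K]) (use ab in auto)
  have bi: "integrable P b"
    by (rule Bochner_Integration.integrable_bound[OF integrable_density_tail[of K]]) (use K bb in \<open>auto simp: b_def\<close>)
  have "AE x in P. cond_exp_diff P F G (\<lambda>x. Z x * g x) x = cond_exp_diff P F G a x + cond_exp_diff P F G b x"
    using sF.real_cond_exp_add[OF ai bi] sG.real_cond_exp_add[OF ai bi]
    by eventually_elim (simp add: cond_exp_diff_def a_def b_def algebra_simps)
  hence "(\<integral>x. \<bar>cond_exp_diff P F G (\<lambda>x. Z x * g x) x\<bar> \<partial>P) \<le>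
        (\<integral>x. \<bar>cond_exp_diff P F G a x\<bar> + (\<bar>real_cond_exp P F b x\<bar> + \<bar>real_cond_exp P G b x\<bar>) \<partial>P)"
    using integrable_Z_mult[OF g g_bound] ai bi
    by (intro integral_mono_AE) (auto simp: cond_exp_diff_def elim!: eventually_mono
        intro!: Bochner_Integration.integrable_add Bochner_Integration.integrable_diff integrable_abs
          sF.real_cond_exp_int(1) sG.real_cond_exp_int(1))
  also have "\<dots> = (\<integral>x. \<bar>cond_exp_diff P F G a x\<bar> \<partial>P) +
      ((\<integral>x. \<bar>real_cond_exp P F b x\<bar> \<partial>P) + (\<integral>x. \<bar>real_cond_exp P G b x\<bar> \<partial>P))"
    using ai bi by (simp add: cond_exp_diff_def sF.real_cond_exp_int(1) sG.real_cond_exp_int(1))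
  also have "\<dots> \<le> K * enn2real (cond_exp_diff_opnorm_inf_1 P F G) + ((\<integral>x. \<bar>b x\<bar> \<partial>P) + (\<integral>x. \<bar>b x\<bar> \<partial>P))"
    by (intro add_mono integral_abs_cond_exp_diff_le[OF prob F G am ab K]
        integral_abs_real_cond_exp_le[OF prob F bi] integral_abs_real_cond_exp_le[OF prob G bi])
  also have "(\<integral>x. \<bar>b x\<bar> \<partial>P) \<le> density_tail K" unfolding density_tail_def
    by (rule integral_mono[OF _ integrable_density_tail]) (use K bi bb in auto)
  finally show ?thesis by simp
qed

definition small_cond_density_mass :: "'a measure \<Rightarrow> real \<Rightarrow> real" where
  "small_cond_density_mass G d = (\<integral>x. (if real_cond_exp P G Z x < 2*d then 1 else 0) \<partial>Q)"

lemma small_cond_density_mass_small: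
  assumes G: "subalgebra P G" and e: "0 < e"
  shows "\<exists>d>0. small_cond_density_mass G d < e"
proof -
  define D where "D = real_cond_exp P G Z"
  have D_meas[measurable]: "D \<in> borel_measurable Q" unfolding D_def by simp
  have "(\<lambda>m. small_cond_density_mass G (1 / (real m + 1))) \<longlonglongrightarrow> (\<integral>x. 0 \<partial>Q)"
    unfolding small_cond_density_mass_def D_def[symmetric]
  proof (rule integral_dominated_convergence[where w="\<lambda>x. 1"])
    show "AE x in Q. (\<lambda>i. if D x < 2 * (1 / (real i + 1)) then 1 else 0::real) \<longlonglongrightarrow> 0"
      using real_cond_exp_Z_pos_AE_density[OF G]
    proof (rule eventually_mono)
      fix x assume x: "0 < real_cond_exp P G Z x"
      have "(\<lambda>i. 2 * (1 / (real i + 1))) \<longlonglongrightarrow> 2 * 0"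
        using LIMSEQ_inverse_real_of_nat
        by (intro tendsto_mult tendsto_const) (simp add: inverse_eq_divide add.commute)
      hence "eventually (\<lambda>i. 2 * (1 / (real i + 1)) < D x) sequentially"
        using x unfolding D_def by (intro order_tendstoD(2)) auto
      hence "eventually (\<lambda>i. (if D x < 2 * (1 / (real i + 1)) then 1 else 0::real) = 0) sequentially"
        by (auto elim!: eventually_mono)
      thus "(\<lambda>i. if D x < 2 * (1 / (real i + 1)) then 1 else 0::real) \<longlonglongrightarrow> 0"
        by (rule tendsto_eventually)
    qed
  qed auto
  hence "eventually (\<lambda>m. small_cond_density_mass G (1 / (real m + 1)) < e) sequentially"
    using e by (intro order_tendstoD(2)) auto
  then obtain m where "small_cond_density_mass G (1 / (real m + 1)) < e"
    by (metis (lifting) eventually_sequentially order.refl)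
  thus ?thesis by (intro exI[of _ "1 / (real m + 1)"]) auto
qed

lemma cond_exp_diff_density_abs_le_AE:
  assumes F: "subalgebra P F" and G: "subalgebra P G" and d: "0 < d"
    and f: "f \<in> borel_measurable P" "\<forall>x\<in>space P. \<bar>f x\<bar> \<le> 1"
  shows "AE x in Q. \<bar>cond_exp_diff Q F G f x\<bar> \<le>
    4 * min 1 ((\<bar>cond_exp_diff P F G (\<lambda>x. Z x * f x) x\<bar> + \<bar>cond_exp_diff P F G Z x\<bar>) / d)
    + 2 * (if real_cond_exp P G Z x < 2*d then 1 else 0)"
  using real_cond_exp_density[OF F f] real_cond_exp_density[OF G f]
    AE_density_if_AE[OF real_cond_exp_Z_mult_abs_le[OF F f]]
    AE_density_if_AE[OF real_cond_exp_Z_mult_abs_le[OF G f]] real_cond_exp_Z_pos_AE_density[OF G]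
proof eventually_elim
  case (elim x)
  thus ?case using abs_div_diff_le[OF elim(3,4,5) d] by (simp add: cond_exp_diff_def)
qed

lemma integral_density_le_truncation:
  assumes [measurable]: "W \<in> borel_measurable P" and W: "\<And>x. 0 \<le> W x" "\<And>x. W x \<le> C" and K: "0 < K"
  shows "(\<integral>x. W x \<partial>Q) \<le> 2 * K * (\<integral>x. W x \<partial>P) + 2 * C * density_tail K"
proof -
  have WP: "integrable P W" by (rule P.integrable_const_bound[of _ C]) (use W in auto)
  have tail: "integrable P (\<lambda>x. Z x - min (Z x) K)" using integrable_density_tail K by simp
  have "0 \<le> C" using W order.trans by blast
  have "(\<integral>x. W x \<partial>Q) = (\<integral>x. Z x * W x \<partial>P)" by (rule integral_density_eq) simp
  also have "\<dots> \<le> (\<integral>x. 2*K*W x + 2*C*(Z x - min (Z x) K) \<partial>P)"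
  proof (rule integral_mono)
    show "integrable P (\<lambda>x. Z x * W x)"
      by (rule Bochner_Integration.integrable_bound[OF integrable_mult_right[OF Z_integrable, of C]])
         (use W Z_nonneg \<open>0 \<le> C\<close> in \<open>auto simp: abs_mult mult.commute[of C] intro!: AE_I2 mult_left_mono\<close>)
    show "Z x * W x \<le> 2*K*W x + 2*C*(Z x - min (Z x) K)" for x
      by (intro mult_le_truncation W Z_nonneg K)
  qed (use WP tail in simp)
  also have "\<dots> = 2 * K * (\<integral>x. W x \<partial>P) + 2 * C * density_tail K"
    using WP tail by (simp add: density_tail_def)
  finally show ?thesis .
qed

lemma integral_abs_cond_exp_diff_density_le:
  assumes F: "subalgebra P F" and G: "subalgebra P G" and d: "0 < d" and K1: "0 < K1" and K2: "0 < K2"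
    and f: "f \<in> borel_measurable P" "\<forall>x\<in>space P. \<bar>f x\<bar> \<le> 1"
  shows "(\<integral>x. \<bar>cond_exp_diff Q F G f x\<bar> \<partial>Q) \<le>
    16*K1/d * (K2 * enn2real (cond_exp_diff_opnorm_inf_1 P F G) + 2 * density_tail K2)
    + 8 * density_tail K1 + 2 * small_cond_density_mass G d"
proof -
  interpret sF: sigma_finite_subalgebra P F using prob_space_sigma_finite_subalgebra[OF prob F] .
  interpret sG: sigma_finite_subalgebra P G using prob_space_sigma_finite_subalgebra[OF prob G] .
  note [measurable] = f(1)
  define L where "L = K2 * enn2real (cond_exp_diff_opnorm_inf_1 P F G) + 2 * density_tail K2"
  define Y where "Y = (\<lambda>x. \<bar>cond_exp_diff P F G (\<lambda>x. Z x * f x) x\<bar> + \<bar>cond_exp_diff P F G (\<lambda>x. Z x * 1) x\<bar>)"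
  define W where "W = (\<lambda>x. 4 * min 1 (Y x / d))"
  define I where "I = (\<lambda>x. if real_cond_exp P G Z x < 2*d then 1 else 0 :: real)"
  have [measurable]: "Y \<in> borel_measurable P" "W \<in> borel_measurable P" "I \<in> borel_measurable P"
    unfolding Y_def W_def I_def by measurable
  have W_bounds: "0 \<le> W x" "W x \<le> 4" for x unfolding W_def Y_def using d by auto
  have "AE x in Q. \<bar>f x\<bar> \<le> 1" using f by (intro AE_I2) auto
  hence "AE x in Q. \<bar>cond_exp_diff Q F G f x\<bar> \<le> 2"
    using cond_exp_diff_abs_le_AE[OF density_prob subalgebra_density[OF F] subalgebra_density[OF G], of f 1]
    by auto
  hence "integrable Q (\<lambda>x. \<bar>cond_exp_diff Q F G f x\<bar>)" by (intro Q.integrable_const_bound[of _ 2]) auto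
  moreover have "AE x in Q. \<bar>cond_exp_diff Q F G f x\<bar> \<le> W x + 2 * I x"
    using cond_exp_diff_density_abs_le_AE[OF F G d f] by (simp add: W_def Y_def I_def)
  moreover have "integrable Q W" using W_bounds by (auto intro!: Q.integrable_const_bound[of _ 4])
  moreover have "integrable Q I" by (auto intro!: Q.integrable_const_bound[of _ 1] simp: I_def)
  ultimately have "(\<integral>x. \<bar>cond_exp_diff Q F G f x\<bar> \<partial>Q) \<le> (\<integral>x. W x \<partial>Q) + 2 * small_cond_density_mass G d"
    using integral_mono_AE[of Q "\<lambda>x. \<bar>cond_exp_diff Q F G f x\<bar>" "\<lambda>x. W x + 2 * I x"]
    by (simp add: small_cond_density_mass_def I_def)
  also have "(\<integral>x. W x \<partial>Q) \<le> 2 * K1 * (\<integral>x. W x \<partial>P) + 8 * density_tail K1"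
    using integral_density_le_truncation[of W 4 K1] W_bounds K1 by simp
  also have "(\<integral>x. W x \<partial>P) \<le> 4 / d * (2 * L)"
  proof -
    have int: "integrable P (\<lambda>x. \<bar>cond_exp_diff P F G h x\<bar>)" if "integrable P h" for h
      unfolding cond_exp_diff_def
      using sF.real_cond_exp_int(1)[OF that] sG.real_cond_exp_int(1)[OF that] by auto
    have Yi: "integrable P Y"
      unfolding Y_def using int integrable_Z_mult[OF f] integrable_Z_mult[of "\<lambda>_. 1"] by auto
    have "(\<integral>x. W x \<partial>P) \<le> (\<integral>x. 4 / d * Y x \<partial>P)"
      by (rule integral_mono) (use Yi d W_bounds in \<open>auto simp: W_def intro!: P.integrable_const_bound[of _ 4]\<close>)
    also have "\<dots> = 4 / d * ((\<integral>x. \<bar>cond_exp_diff P F G (\<lambda>x. Z x * f x) x\<bar> \<partial>P) +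
        (\<integral>x. \<bar>cond_exp_diff P F G (\<lambda>x. Z x * 1) x\<bar> \<partial>P))"
      unfolding Y_def using int integrable_Z_mult[OF f] integrable_Z_mult[of "\<lambda>_. 1"] by simp
    also have "\<dots> \<le> 4 / d * (L + L)" unfolding L_def
      using d f by (intro mult_left_mono add_mono integral_abs_cond_exp_diff_Z_mult_le[OF F G _ _ K2]) auto
    finally show ?thesis by simp
  qed
  finally show ?thesis
    using K1 d by (simp add: L_def field_simps mult_left_mono)
qed

lemma cond_exp_diff_opnorm_inf_1_density_le:
  assumes "subalgebra P F" "subalgebra P G" "0 < d" "0 < K1" "0 < K2"
  shows "cond_exp_diff_opnorm_inf_1 Q F G \<le> ennreal
    (16*K1/d * (K2 * enn2real (cond_exp_diff_opnorm_inf_1 P F G) + 2 * density_tail K2)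
      + 8 * density_tail K1 + 2 * small_cond_density_mass G d)"
  unfolding cond_exp_diff_opnorm_inf_1_def[of Q]
  by (rule SUP_least) (use integral_abs_cond_exp_diff_density_le[OF assms] in \<open>auto intro: ennreal_leI\<close>)

lemma cond_exp_diff_opnorm_inf_1_density_tendsto_0:
  assumes B: "\<And>n. subalgebra P (B n)"
    and lim: "(\<lambda>n. cond_exp_diff_opnorm_inf_1 P (B n) (B 0)) \<longlonglongrightarrow> 0"
  shows "(\<lambda>n. cond_exp_diff_opnorm_inf_1 Q (B n) (B 0)) \<longlonglongrightarrow> 0"
proof (rule tendsto_zero_ennreal)
  fix e :: real assume e: "0 < e"
  obtain d where d: "0 < d" "small_cond_density_mass (B 0) d < e/8"
    using small_cond_density_mass_small[OF B, of "e/8"] e by auto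
  obtain K1 where K1: "0 < K1" "density_tail K1 < e/32" using density_tail_small[of "e/32"] e by auto
  obtain K2 where K2: "0 < K2" "density_tail K2 < e*d/(128*K1)"
    using density_tail_small[of "e*d/(128*K1)"] e d K1 by auto
  define c where "c = (\<lambda>n. enn2real (cond_exp_diff_opnorm_inf_1 P (B n) (B 0)))"
  have "c \<longlonglongrightarrow> 0" unfolding c_def using tendsto_enn2real[of _ 0] lim by simp
  hence "(\<lambda>n. 16*K1/d*K2 * c n) \<longlonglongrightarrow> 16*K1/d*K2 * 0" by (intro tendsto_mult tendsto_const)
  hence "eventually (\<lambda>n. 16*K1/d*K2 * c n < e/4) sequentially"
    using e by (intro order_tendstoD(2)) auto
  thus "eventually (\<lambda>n. cond_exp_diff_opnorm_inf_1 Q (B n) (B 0) < ennreal e) sequentially"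
  proof eventually_elim
    case (elim n)
    have "32*K1/d * density_tail K2 < 32*K1/d * (e*d/(128*K1))"
      using K2(2) K1(1) d(1) by (intro mult_strict_left_mono) auto
    also have "\<dots> = e/4" using K1(1) d(1) by (simp add: field_simps)
    finally have tail2: "32*K1/d * density_tail K2 < e/4" .
    have "16*K1/d*(K2 * c n + 2 * density_tail K2) =
        16*K1/d*K2 * c n + 32*K1/d * density_tail K2"
      by (simp add: algebra_simps)
    hence "16*K1/d*(K2 * c n + 2 * density_tail K2) + 8 * density_tail K1
        + 2 * small_cond_density_mass (B 0) d < e"
      using elim tail2 K1(2) d(2) by linarith
    hence "ennreal (16*K1/d*(K2 * c n + 2 * density_tail K2) + 8 * density_tail K1
        + 2 * small_cond_density_mass (B 0) d) < ennreal e"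
      using e by (intro ennreal_lessI)
    thus ?case
      using cond_exp_diff_opnorm_inf_1_density_le[OF B B d(1) K1(1) K2(1), of n]
      unfolding c_def by (rule order.strict_trans1[rotated])
  qed
qed

end

lemma equiv_prob_space_eq_density:
  assumes P: "prob_space P" and Q: "prob_space Q" and "equiv_measure P Q"
  obtains Z where "prob_density P Z" "Q = density P (\<lambda>x. ennreal (Z x))"
proof -
  interpret P: prob_space P by fact
  interpret Q: prob_space Q by fact
  have sets: "sets Q = sets P" using assms(3) by (simp add: equiv_measure_def)
  have ac: "absolutely_continuous P Q"
    using assms(3) unfolding absolutely_continuous_def equiv_measure_def by simp
  define Z where "Z = (\<lambda>x. enn2real (RN_deriv P Q x))"
  have Zm[measurable]: "Z \<in> borel_measurable P" unfolding Z_def by simp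
  have "AE x in P. RN_deriv P Q x \<noteq> \<infinity>"
    by (rule P.RN_deriv_finite[OF Q.sigma_finite_measure_axioms ac sets])
  hence "density P (\<lambda>x. ennreal (Z x)) = density P (RN_deriv P Q)"
    by (intro density_cong) (auto simp: Z_def less_top elim!: eventually_mono)
  also have "\<dots> = Q" by (rule P.density_RN_deriv[OF ac sets])
  finally have Q_eq: "Q = density P (\<lambda>x. ennreal (Z x))" ..
  have "integrable Q (\<lambda>x. 1::real)" by simp
  hence "integrable P Z" unfolding Q_eq by (subst (asm) integrable_density) (auto simp: Z_def)
  moreover have "prob_space (density P (\<lambda>x. ennreal (Z x)))" using Q unfolding Q_eq .
  ultimately have "prob_density P Z" by (intro prob_density.intro P Zm) (simp_all add: Z_def)
  with Q_eq show ?thesis by (intro that)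
qed

theorem mainTheorem9:
  fixes P Q :: "'a measure" and B :: "nat \<Rightarrow> 'a measure" and p q :: ennreal
  assumes "prob_space P" and "prob_space Q" and "equiv_measure P Q"
    and "1 \<le> q" and "q < p"
    and "\<And>n. sigma_subfield P (B n)"
  shows "(\<lambda>n. cond_exp_diff_opnorm P p q (B n) (B 0)) \<longlonglongrightarrow> 0 \<longleftrightarrow>
         (\<lambda>n. cond_exp_diff_opnorm Q p q (B n) (B 0)) \<longlonglongrightarrow> 0"
proof -
  have sub_P: "subalgebra P (B n)" for n using assms(6) by (simp add: sigma_subfield_def)
  have "sets Q = sets P" using assms(3) by (simp add: equiv_measure_def)
  hence sub_Q: "subalgebra Q (B n)" for n
    using sub_P sets_eq_imp_space_eq[of Q P] by (simp add: subalgebra_def)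
  have equiv_QP: "equiv_measure Q P" using assms(3) by (simp add: equiv_measure_def)
  have transfer: "(\<lambda>n. cond_exp_diff_opnorm_inf_1 R' (B n) (B 0)) \<longlonglongrightarrow> 0"
    if R: "prob_space R" "prob_space R'" "equiv_measure R R'" and sub: "\<And>n. subalgebra R (B n)"
      and lim: "(\<lambda>n. cond_exp_diff_opnorm_inf_1 R (B n) (B 0)) \<longlonglongrightarrow> 0" for R R'
  proof -
    obtain Z where "prob_density R Z" and "R' = density R (\<lambda>x. ennreal (Z x))"
      using equiv_prob_space_eq_density[OF R] .
    thus ?thesis using prob_density.cond_exp_diff_opnorm_inf_1_density_tendsto_0[OF _ sub lim] by simp
  qed
  show ?thesis
    using cond_exp_diff_opnorm_tendsto_0_iff[where B = B, OF assms(1) sub_P assms(4,5)]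
      cond_exp_diff_opnorm_tendsto_0_iff[where B = B, OF assms(2) sub_Q assms(4,5)]
      transfer[OF assms(1-3) sub_P] transfer[OF assms(2,1) equiv_QP sub_Q] by blast
qed

end
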